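(* Let $G=\mathrm{SL}_3(\mathbb{R})$, $U=U_3(\mathbb{R})$, $\Gamma=\mathrm{SL}_3(\mathbb{Z})$ acting on $G/U$ by left multiplication. Then: (1) if $g\in P_+$, the stabilizer of $gU$ in $\Gamma$ is $H_3(\mathbb{Z})$; (2) if $g\in P_{i,+}\setminus\Gamma P$ for $i\in\{1,2\}$, the stabilizer of $gU$ is $\Gamma_i$; (3) if $g\in G\setminus(\Gamma P_1\cup\Gamma P_2)$, the stabilizer of $gU$ is trivial.
   Context: $U_3(\mathbb{R})$: unipotent upper triangular matrices. $P$: upper triangular matrices in $G$; $P_+\subset P$: those with positive diagonal entries. $P_1$: matrices in $G$ with $g_{31}=g_{32}=0$; $P_{1,+}\subset P_1$: those with $g_{33}>0$. $P_2$: matrices in $G$ with $g_{21}=g_{31}=0$; $P_{2,+}\subset P_2$: those with $g_{11}>0$. $H_3(\mathbb{Z})=\Gamma\cap U$ (integer unipotent upper triangular matrices); $\Gamma_1=\{I+aE_{13}+bE_{23}: a,b\in\mathbb{Z}\}$; $\Gamma_2=\{I+aE_{12}+bE_{13}: a,b\in\mathbb{Z}\}$, with $E_{ij}$ matrix units. *)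

theory Defs
  imports "HOL-Analysis.Analysis"
begin

type_synonym mat3 = "real^3^3"

definition SL3R :: "mat3 set" where
  "SL3R = {A. det A = 1}"

definition SL3Z :: "mat3 set" where
  "SL3Z = {A \<in> SL3R. \<forall>i j. A $ i $ j \<in> \<int>}"

definition U3 :: "mat3 set" where
  "U3 = {A. A$1$1 = 1 \<and> A$2$2 = 1 \<and> A$3$3 = 1 \<and>
            A$2$1 = 0 \<and> A$3$1 = 0 \<and> A$3$2 = 0}"

definition Pb :: "mat3 set" where
  "Pb = {A \<in> SL3R. A$2$1 = 0 \<and> A$3$1 = 0 \<and> A$3$2 = 0}"

definition Pb_plus :: "mat3 set" where
  "Pb_plus = {A \<in> Pb. A$1$1 > 0 \<and> A$2$2 > 0 \<and> A$3$3 > 0}"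

definition P1 :: "mat3 set" where
  "P1 = {A \<in> SL3R. A$3$1 = 0 \<and> A$3$2 = 0}"

definition P1_plus :: "mat3 set" where
  "P1_plus = {A \<in> P1. A$3$3 > 0}"

definition P2 :: "mat3 set" where
  "P2 = {A \<in> SL3R. A$2$1 = 0 \<and> A$3$1 = 0}"

definition P2_plus :: "mat3 set" where
  "P2_plus = {A \<in> P2. A$1$1 > 0}"

definition H3Z :: "mat3 set" where
  "H3Z = SL3Z \<inter> U3"

definition Eu :: "3 \<Rightarrow> 3 \<Rightarrow> mat3" where
  "Eu i j = (\<chi> k l. if k = i \<and> l = j then 1 else 0)"

definition Gamma1 :: "mat3 set" where
  "Gamma1 = {mat 1 + of_int a *\<^sub>R Eu 1 3 + of_int b *\<^sub>R Eu 2 3 | a b :: int. True}"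

definition Gamma2 :: "mat3 set" where
  "Gamma2 = {mat 1 + of_int a *\<^sub>R Eu 1 2 + of_int b *\<^sub>R Eu 1 3 | a b :: int. True}"

definition setmul :: "mat3 set \<Rightarrow> mat3 set \<Rightarrow> mat3 set" where
  "setmul A B = {a ** b | a b. a \<in> A \<and> b \<in> B}"

definition cosetU :: "mat3 \<Rightarrow> mat3 set" where
  "cosetU g = (\<lambda>u. g ** u) ` U3"

definition stabGamma :: "mat3 \<Rightarrow> mat3 set" where
  "stabGamma g = {\<gamma> \<in> SL3Z. (\<lambda>x. \<gamma> ** x) ` cosetU g = cosetU g}"

end

theory Submission
  imports Defs
begin

text \<open>
  The coset \<open>gU\<close> is fixed by \<open>\<gamma>\<close> iff \<open>\<gamma> g = g u\<close> for some \<open>u \<in> U\<close>, i.e. iff \<open>\<gamma>\<close> fixes the first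
  column \<open>v\<^sub>1\<close> of \<open>g\<close>, maps the second column \<open>v\<^sub>2\<close> to \<open>v\<^sub>2 + c v\<^sub>1\<close>, and so on.
  For upper triangular \<open>g\<close> this forces \<open>\<gamma> \<in> U\<close>. For \<open>g \<in> P\<^sub>1\<close>, the third row of \<open>\<gamma>\<close> must be
  \<open>(0, 0, 1)\<close> and the upper left block of \<open>\<gamma>\<close> must fix \<open>(g\<^sub>1\<^sub>1, g\<^sub>2\<^sub>1)\<close>; if that integral block
  is not the identity, it yields an integer relation between \<open>g\<^sub>1\<^sub>1\<close> and \<open>g\<^sub>2\<^sub>1\<close>, and a Bezout
  row operation from \<open>SL\<^sub>2(\<int>)\<close> then kills \<open>g\<^sub>2\<^sub>1\<close>, putting \<open>g\<close> into \<open>\<Gamma> P\<close>. The case \<open>P\<^sub>2\<close> is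
  the same with the lower right block. For general \<open>g\<close>, \<open>N = \<gamma> - 1\<close> is an integral matrix with
  \<open>N v\<^sub>1 = 0\<close> and \<open>N v\<^sub>2 = c v\<^sub>1\<close>. If \<open>N \<noteq> 0\<close>, either two rows of \<open>N\<close> are independent and their
  cross product is an integral vector parallel to \<open>v\<^sub>1\<close>, or \<open>N\<close> has rank one and some integral
  row of \<open>N\<close> is orthogonal to \<open>v\<^sub>1\<close> and \<open>v\<^sub>2\<close>, or \<open>v\<^sub>1\<close> is parallel to an integral column of \<open>N\<close>.
  Moving that integral vector to a coordinate axis by \<open>SL\<^sub>3(\<int>)\<close> puts \<open>g\<close> into \<open>\<Gamma> P\<^sub>2\<close> resp.
  \<open>\<Gamma> P\<^sub>1\<close>.
\<close>

lemma matrix_mult_3_nth: "((A::mat3) ** B)$i$j = A$i$1*B$1$j + A$i$2*B$2$j + A$i$3*B$3$j"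
  by (simp add: matrix_matrix_mult_def sum_3)

lemma matrix_vector_mult_3_nth: "((A::mat3) *v x)$i = A$i$1*x$1 + A$i$2*x$2 + A$i$3*x$3"
  by (simp add: matrix_vector_mult_def sum_3)

lemma matrix_mult_nth_inner: "((A::real^'n^'m) ** B)$i$j = A$i \<bullet> column j B"
  by (simp add: matrix_matrix_mult_def inner_vec_def column_def)

lemma matrix_vector_mult_nth_inner: "((A::real^'n^'m) *v x)$i = A$i \<bullet> x"
  by (simp add: matrix_vector_mult_def inner_vec_def)

lemma mat3_eq_iff: "(A::mat3) = B \<longleftrightarrow>
    A$1$1 = B$1$1 \<and> A$1$2 = B$1$2 \<and> A$1$3 = B$1$3 \<and>
    A$2$1 = B$2$1 \<and> A$2$2 = B$2$2 \<and> A$2$3 = B$2$3 \<and>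
    A$3$1 = B$3$1 \<and> A$3$2 = B$3$2 \<and> A$3$3 = B$3$3"
  by (auto simp add: vec_eq_iff forall_3)

definition matrix3 :: "real \<Rightarrow> real \<Rightarrow> real \<Rightarrow> real \<Rightarrow> real \<Rightarrow> real \<Rightarrow> real \<Rightarrow> real \<Rightarrow> real \<Rightarrow> mat3"
  where "matrix3 a b c d e f g h i = vector [vector [a, b, c], vector [d, e, f], vector [g, h, i]]"

lemma matrix3_nth [simp]:
  "matrix3 a b c d e f g h i $1$1 = a" "matrix3 a b c d e f g h i $1$2 = b"
  "matrix3 a b c d e f g h i $1$3 = c" "matrix3 a b c d e f g h i $2$1 = d"
  "matrix3 a b c d e f g h i $2$2 = e" "matrix3 a b c d e f g h i $2$3 = f"
  "matrix3 a b c d e f g h i $3$1 = g" "matrix3 a b c d e f g h i $3$2 = h"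
  "matrix3 a b c d e f g h i $3$3 = i"
  by (simp_all add: matrix3_def)

lemma kernel_2x2_trivial:
  fixes p q r s x y :: real
  assumes "p * x + q * y = 0" "r * x + s * y = 0" "p * s - q * r \<noteq> 0"
  shows "x = 0" "y = 0"
proof -
  have "(p * s - q * r) * x = s * (p * x + q * y) - q * (r * x + s * y)"
    by (simp add: algebra_simps)
  then show "x = 0" using assms(3) unfolding assms(1,2) by simp
  have "(p * s - q * r) * y = p * (r * x + s * y) - r * (p * x + q * y)"
    by (simp add: algebra_simps)
  then show "y = 0" using assms(3) unfolding assms(1,2) by simp
qed

lemma cross3_cross3: "cross3 v (cross3 a b) = (v \<bullet> b) *\<^sub>R a - (v \<bullet> a) *\<^sub>R b"
  by (simp add: cross3_simps forall_3)

lemma parallel_inner_eq_0: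
  assumes "cross3 v w = 0" "w \<noteq> 0" "k \<bullet> w = 0" shows "k \<bullet> v = 0"
  using cross3_cross3[of k v w] assms by simp

lemma parallel_inner_nth:
  assumes "cross3 a b = 0" shows "(b \<bullet> v) * a$k = (a \<bullet> v) * b$k"
  using arg_cong[OF cross3_cross3[of v a b], of "\<lambda>x. x$k"] assms by (simp add: inner_commute)

definition adjugate3 :: "mat3 \<Rightarrow> mat3" where
  "adjugate3 A = matrix3
     (A$2$2*A$3$3 - A$2$3*A$3$2) (A$1$3*A$3$2 - A$1$2*A$3$3) (A$1$2*A$2$3 - A$1$3*A$2$2)
     (A$2$3*A$3$1 - A$2$1*A$3$3) (A$1$1*A$3$3 - A$1$3*A$3$1) (A$1$3*A$2$1 - A$1$1*A$2$3)
     (A$2$1*A$3$2 - A$2$2*A$3$1) (A$1$2*A$3$1 - A$1$1*A$3$2) (A$1$1*A$2$2 - A$1$2*A$2$1)"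

lemma adjugate3_mult: "adjugate3 A ** A = det A *\<^sub>R mat 1"
  unfolding mat3_eq_iff matrix_mult_3_nth det_3 adjugate3_def by (simp add: mat_def) algebra

lemma mat_1_in_SL3Z: "mat 1 \<in> SL3Z"
  by (simp add: SL3Z_def SL3R_def) (simp add: mat_def)

lemma SL3Z_mult: "A \<in> SL3Z \<Longrightarrow> B \<in> SL3Z \<Longrightarrow> A ** B \<in> SL3Z"
  by (simp add: SL3Z_def SL3R_def det_mul matrix_mult_3_nth)

lemma SL3Z_inverse:
  assumes "A \<in> SL3Z" obtains B where "B \<in> SL3Z" "B ** A = mat 1" "A ** B = mat 1"
proof
  have det: "det A = 1" using assms by (simp add: SL3Z_def SL3R_def)
  show left: "adjugate3 A ** A = mat 1" by (simp add: adjugate3_mult det)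
  then show "A ** adjugate3 A = mat 1" by (simp add: matrix_left_right_inverse)
  have "det (adjugate3 A) = 1" using det_mul[of "adjugate3 A" A] by (simp add: left det)
  moreover have "\<forall>i j. adjugate3 A $ i $ j \<in> \<int>"
    using assms unfolding SL3Z_def adjugate3_def by (auto simp: forall_3)
  ultimately show "adjugate3 A \<in> SL3Z" by (simp add: SL3Z_def SL3R_def)
qed

lemma in_setmul_SL3Z_I:
  assumes "M \<in> SL3Z" "M ** g \<in> P" shows "g \<in> setmul SL3Z P"
proof -
  obtain B where B: "B \<in> SL3Z" "B ** M = mat 1" using SL3Z_inverse assms(1) by blast
  have "g = B ** (M ** g)" by (simp add: matrix_mul_assoc B(2))
  then show ?thesis unfolding setmul_def using B(1) assms(2) by blast
qed

lemma Gamma1_eq: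
  "Gamma1 = {\<gamma> \<in> SL3Z. \<gamma>$1$1 = 1 \<and> \<gamma>$1$2 = 0 \<and> \<gamma>$2$1 = 0 \<and> \<gamma>$2$2 = 1 \<and>
                        \<gamma>$3$1 = 0 \<and> \<gamma>$3$2 = 0 \<and> \<gamma>$3$3 = 1}" (is "_ = ?R")
proof
  show "Gamma1 \<subseteq> ?R"
    by (auto simp: Gamma1_def SL3Z_def SL3R_def det_3 Eu_def mat_def forall_3)
  show "?R \<subseteq> Gamma1"
  proof
    fix \<gamma> assume \<gamma>: "\<gamma> \<in> ?R"
    have "\<gamma>$1$3 \<in> \<int>" "\<gamma>$2$3 \<in> \<int>" using \<gamma> by (simp_all add: SL3Z_def)
    then obtain a b where "\<gamma>$1$3 = of_int a" "\<gamma>$2$3 = of_int b" by (metis Ints_cases)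
    then have "\<gamma> = mat 1 + of_int a *\<^sub>R Eu 1 3 + of_int b *\<^sub>R Eu 2 3"
      using \<gamma> by (simp add: mat3_eq_iff Eu_def mat_def)
    then show "\<gamma> \<in> Gamma1" unfolding Gamma1_def by blast
  qed
qed

lemma Gamma2_eq:
  "Gamma2 = {\<gamma> \<in> SL3Z. \<gamma>$1$1 = 1 \<and> \<gamma>$2$1 = 0 \<and> \<gamma>$2$2 = 1 \<and> \<gamma>$2$3 = 0 \<and>
                        \<gamma>$3$1 = 0 \<and> \<gamma>$3$2 = 0 \<and> \<gamma>$3$3 = 1}" (is "_ = ?R")
proof
  show "Gamma2 \<subseteq> ?R"
    by (auto simp: Gamma2_def SL3Z_def SL3R_def det_3 Eu_def mat_def forall_3)
  show "?R \<subseteq> Gamma2"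
  proof
    fix \<gamma> assume \<gamma>: "\<gamma> \<in> ?R"
    have "\<gamma>$1$2 \<in> \<int>" "\<gamma>$1$3 \<in> \<int>" using \<gamma> by (simp_all add: SL3Z_def)
    then obtain a b where "\<gamma>$1$2 = of_int a" "\<gamma>$1$3 = of_int b" by (metis Ints_cases)
    then have "\<gamma> = mat 1 + of_int a *\<^sub>R Eu 1 2 + of_int b *\<^sub>R Eu 1 3"
      using \<gamma> by (simp add: mat3_eq_iff Eu_def mat_def)
    then show "\<gamma> \<in> Gamma2" unfolding Gamma2_def by blast
  qed
qed

lemma SL2Z_annihilator:
  assumes "m \<in> \<int>" "n \<in> \<int>" "m \<noteq> 0 \<or> n \<noteq> 0" "m * x + n * y = (0::real)"
  obtains a b c d where "a \<in> \<int>" "b \<in> \<int>" "c \<in> \<int>" "d \<in> \<int>" "a * d - b * c = 1"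
    "c * x + d * y = 0"
proof -
  obtain m' n' where mn: "m = of_int m'" "n = of_int n'" using assms(1,2) Ints_cases by metis
  define k where "k = gcd m' n'"
  have "k \<noteq> 0" using assms(3) mn by (simp add: k_def)
  obtain c d where cd: "m' = k * c" "n' = k * d" unfolding k_def by (meson dvdE gcd_dvd1 gcd_dvd2)
  obtain s t where "s * m' + t * n' = k" unfolding k_def using bezout_int by blast
  then have "k * (s * c + t * d) = k * 1" using cd by (simp add: algebra_simps)
  then have "s * c + t * d = 1" using \<open>k \<noteq> 0\<close> by (metis mult_left_cancel)
  then have det: "of_int t * of_int d - of_int (- s) * of_int c = (1::real)"
    by (metis (mono_tags) of_int_1 of_int_eq_iff of_int_mult of_int_diff
        diff_minus_eq_add mult.commute mult_minus_left add.commute)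
  have "of_int k * (of_int c * x + of_int d * y) = (0::real)"
    using assms(4) mn cd by (simp add: algebra_simps)
  then have "of_int c * x + of_int d * y = 0" using \<open>k \<noteq> 0\<close> by simp
  then show ?thesis using that[OF Ints_of_int Ints_of_int Ints_of_int Ints_of_int det] by blast
qed

lemma SL2Z_annihilator_Ints:
  assumes "p \<in> \<int>" "q \<in> \<int>"
  obtains a b c d where "a \<in> \<int>" "b \<in> \<int>" "c \<in> \<int>" "d \<in> \<int>" "a * d - b * c = 1"
    "c * p + d * q = (0::real)"
proof (cases "p = 0 \<and> q = 0")
  case True
  then show ?thesis using that[of 1 0 0 1] by simp
next
  case False
  then show ?thesis
    using SL2Z_annihilator[of q "- p" p q] assms that by (auto simp: algebra_simps)
qed

lemma integer_relation_of_fixed_pair: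
  assumes "p \<in> \<int>" "q \<in> \<int>" "r \<in> \<int>" "s \<in> \<int>"
    and "p * x + q * y = x" "r * x + s * y = (y::real)" "\<not> (p = 1 \<and> q = 0 \<and> r = 0 \<and> s = 1)"
  obtains m n where "m \<in> \<int>" "n \<in> \<int>" "m \<noteq> 0 \<or> n \<noteq> 0" "m * x + n * y = 0"
proof (cases "p \<noteq> 1 \<or> q \<noteq> 0")
  case True
  then show ?thesis using that[of "p - 1" q] assms by (auto simp: algebra_simps)
next
  case False
  then show ?thesis using that[of r "s - 1"] assms by (auto simp: algebra_simps)
qed

lemma SL2Z_embed_12:
  "a \<in> \<int> \<Longrightarrow> b \<in> \<int> \<Longrightarrow> c \<in> \<int> \<Longrightarrow> d \<in> \<int> \<Longrightarrow> a * d - b * c = 1 \<Longrightarrow>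
    matrix3 a b 0 c d 0 0 0 1 \<in> SL3Z"
  by (auto simp: SL3Z_def SL3R_def det_3 forall_3)

lemma SL2Z_embed_23:
  "a \<in> \<int> \<Longrightarrow> b \<in> \<int> \<Longrightarrow> c \<in> \<int> \<Longrightarrow> d \<in> \<int> \<Longrightarrow> a * d - b * c = 1 \<Longrightarrow>
    matrix3 1 0 0 0 a b 0 c d \<in> SL3Z"
  by (auto simp: SL3Z_def SL3R_def det_3 forall_3)

lemma SL3Z_clear_integer_vector:
  assumes "\<forall>i. w$i \<in> \<int>"
  obtains K where "K \<in> SL3Z" "(K *v w)$2 = 0" "(K *v w)$3 = 0"
proof -
  obtain a b c d where abcd: "a \<in> \<int>" "b \<in> \<int>" "c \<in> \<int>" "d \<in> \<int>" "a * d - b * c = 1"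
    "c * w$2 + d * w$3 = 0"
    using SL2Z_annihilator_Ints assms by blast
  obtain a' b' c' d' where abcd': "a' \<in> \<int>" "b' \<in> \<int>" "c' \<in> \<int>" "d' \<in> \<int>" "a' * d' - b' * c' = 1"
    "c' * w$1 + d' * (a * w$2 + b * w$3) = 0"
  proof (rule SL2Z_annihilator_Ints)
    show "w$1 \<in> \<int>" "a * w$2 + b * w$3 \<in> \<int>" using assms abcd by simp_all
  qed
  define K where "K = matrix3 a' b' 0 c' d' 0 0 0 1 ** matrix3 1 0 0 0 a b 0 c d"
  have "K \<in> SL3Z" unfolding K_def using abcd abcd' by (intro SL3Z_mult SL2Z_embed_12 SL2Z_embed_23)
  moreover have "(K *v w)$2 = 0" "(K *v w)$3 = 0"
    using abcd(6) abcd'(6)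
    by (simp_all add: K_def matrix_vector_mult_3_nth matrix_mult_3_nth algebra_simps)
  ultimately show ?thesis using that by blast
qed

lemma SL3Z_integer_row_multiple:
  assumes "\<forall>i. n$i \<in> \<int>" "n \<noteq> 0"
  obtains M x where "M \<in> SL3Z" "x \<noteq> 0" "n = x *\<^sub>R M$3"
proof -
  obtain K where K: "K \<in> SL3Z" "(K *v n)$2 = 0" "(K *v n)$3 = 0"
    using SL3Z_clear_integer_vector assms(1) by blast
  obtain B where B: "B \<in> SL3Z" "B ** K = mat 1" using SL3Z_inverse K(1) by blast
  define x where "x = (K *v n)$1"
  have "n = B *v (K *v n)" by (simp add: matrix_vector_mul_assoc B(2))
  also have "\<dots> = x *\<^sub>R column 1 B"
    using K(2,3) by (simp add: vec_eq_iff matrix_vector_mult_3_nth x_def column_def)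
  finally have n: "n = x *\<^sub>R column 1 B" .
  then have "x \<noteq> 0" using assms(2) by auto
  \<comment> \<open>the transpose of \<open>B\<close> with cyclically permuted rows, so \<open>det M = det B\<close>\<close>
  define M where "M = matrix3 (B$1$2) (B$2$2) (B$3$2) (B$1$3) (B$2$3) (B$3$3) (B$1$1) (B$2$1) (B$3$1)"
  have "det M = det B" unfolding M_def det_3 matrix3_nth by algebra
  then have "M \<in> SL3Z" using B(1) unfolding M_def SL3Z_def SL3R_def by (auto simp: forall_3)
  moreover have "M$3 = column 1 B" by (simp add: vec_eq_iff forall_3 M_def column_def)
  ultimately show ?thesis using that n \<open>x \<noteq> 0\<close> by metis
qed

lemma P1_det: "g \<in> P1 \<Longrightarrow> g$3$3 * (g$1$1 * g$2$2 - g$1$2 * g$2$1) = 1"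
  unfolding P1_def SL3R_def det_3 by clarify algebra

lemma P2_det: "g \<in> P2 \<Longrightarrow> g$1$1 * (g$2$2 * g$3$3 - g$2$3 * g$3$2) = 1"
  unfolding P2_def SL3R_def det_3 by clarify algebra

lemma in_setmul_SL3Z_Pb_of_P1:
  assumes "g \<in> P1" "m \<in> \<int>" "n \<in> \<int>" "m \<noteq> 0 \<or> n \<noteq> 0" "m * g$1$1 + n * g$2$1 = 0"
  shows "g \<in> setmul SL3Z Pb"
proof -
  obtain a b c d where abcd: "a \<in> \<int>" "b \<in> \<int>" "c \<in> \<int>" "d \<in> \<int>" "a * d - b * c = 1"
    "c * g$1$1 + d * g$2$1 = 0"
    using SL2Z_annihilator assms(2-5) by blast
  let ?M = "matrix3 a b 0 c d 0 0 0 1"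
  have M: "?M \<in> SL3Z" using SL2Z_embed_12 abcd by blast
  have "det (?M ** g) = 1" using M assms(1) by (simp add: det_mul SL3Z_def SL3R_def P1_def)
  then have "?M ** g \<in> Pb"
    using abcd(6) assms(1) by (simp add: Pb_def SL3R_def P1_def matrix_mult_3_nth)
  then show ?thesis using in_setmul_SL3Z_I M by blast
qed

lemma in_setmul_SL3Z_Pb_of_P2:
  assumes "g \<in> P2" "m \<in> \<int>" "n \<in> \<int>" "m \<noteq> 0 \<or> n \<noteq> 0" "m * g$2$2 + n * g$3$2 = 0"
  shows "g \<in> setmul SL3Z Pb"
proof -
  obtain a b c d where abcd: "a \<in> \<int>" "b \<in> \<int>" "c \<in> \<int>" "d \<in> \<int>" "a * d - b * c = 1"
    "c * g$2$2 + d * g$3$2 = 0"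
    using SL2Z_annihilator assms(2-5) by blast
  let ?M = "matrix3 1 0 0 0 a b 0 c d"
  have M: "?M \<in> SL3Z" using SL2Z_embed_23 abcd by blast
  have "det (?M ** g) = 1" using M assms(1) by (simp add: det_mul SL3Z_def SL3R_def P2_def)
  then have "?M ** g \<in> Pb"
    using abcd(6) assms(1) by (simp add: Pb_def SL3R_def P2_def matrix_mult_3_nth)
  then show ?thesis using in_setmul_SL3Z_I M by blast
qed

lemma in_setmul_SL3Z_P1I:
  assumes "det g = 1" "\<forall>i. n$i \<in> \<int>" "n \<noteq> 0"
    and "n \<bullet> column 1 g = 0" "n \<bullet> column 2 g = 0"
  shows "g \<in> setmul SL3Z P1"
proof -
  obtain M x where M: "M \<in> SL3Z" "x \<noteq> 0" "n = x *\<^sub>R M$3"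
    using SL3Z_integer_row_multiple assms(2,3) by blast
  have "x * (M ** g)$3$j = n \<bullet> column j g" for j by (simp add: M(3) matrix_mult_nth_inner)
  then have "(M ** g)$3$1 = 0" "(M ** g)$3$2 = 0" using assms(4,5) M(2) by (metis mult_eq_0_iff)+
  moreover have "det (M ** g) = 1" using M(1) assms(1) by (simp add: det_mul SL3Z_def SL3R_def)
  ultimately have "M ** g \<in> P1" by (simp add: P1_def SL3R_def)
  then show ?thesis using in_setmul_SL3Z_I M(1) by blast
qed

lemma in_setmul_SL3Z_P2I:
  assumes "det g = 1" "\<forall>i. w$i \<in> \<int>" "w \<noteq> 0" "cross3 (column 1 g) w = 0"
  shows "g \<in> setmul SL3Z P2"
proof -
  obtain K where K: "K \<in> SL3Z" "(K *v w)$2 = 0" "(K *v w)$3 = 0"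
    using SL3Z_clear_integer_vector assms(2) by blast
  then have "K$i \<bullet> column 1 g = 0" if "i = 2 \<or> i = 3" for i
    using that parallel_inner_eq_0[OF assms(4,3)] by (auto simp: matrix_vector_mult_nth_inner)
  then have "(K ** g)$2$1 = 0" "(K ** g)$3$1 = 0" by (simp_all add: matrix_mult_nth_inner)
  moreover have "det (K ** g) = 1" using K(1) assms(1) by (simp add: det_mul SL3Z_def SL3R_def)
  ultimately have "K ** g \<in> P2" by (simp add: P2_def SL3R_def)
  then show ?thesis using in_setmul_SL3Z_I K(1) by blast
qed

lemma mat_1_in_U3: "mat 1 \<in> U3"
  by (simp add: U3_def mat_def)

lemma U3_mult: "u \<in> U3 \<Longrightarrow> v \<in> U3 \<Longrightarrow> u ** v \<in> U3"
  by (simp add: U3_def matrix_mult_3_nth)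

lemma U3_right_inverse:
  assumes "u \<in> U3" obtains v where "v \<in> U3" "u ** v = mat 1"
proof
  show "matrix3 1 (- u$1$2) (u$1$2 * u$2$3 - u$1$3) 0 1 (- u$2$3) 0 0 1 \<in> U3"
    by (simp add: U3_def)
  show "u ** matrix3 1 (- u$1$2) (u$1$2 * u$2$3 - u$1$3) 0 1 (- u$2$3) 0 0 1 = mat 1"
    using assms by (simp add: U3_def mat3_eq_iff matrix_mult_3_nth mat_def algebra_simps)
qed

lemma U3_left_translate: assumes "u \<in> U3" shows "(\<lambda>x. u ** x) ` U3 = U3"
proof
  show "(\<lambda>x. u ** x) ` U3 \<subseteq> U3" using assms U3_mult by auto
  show "U3 \<subseteq> (\<lambda>x. u ** x) ` U3"
  proof
    fix y assume y: "y \<in> U3"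
    obtain v where v: "v \<in> U3" "u ** v = mat 1" using U3_right_inverse assms by blast
    have "y = u ** (v ** y)" by (simp add: matrix_mul_assoc v(2))
    then show "y \<in> (\<lambda>x. u ** x) ` U3" using U3_mult v(1) y by blast
  qed
qed

lemma stabGamma_eq: "stabGamma g = {\<gamma> \<in> SL3Z. \<exists>u\<in>U3. \<gamma> ** g = g ** u}"
proof -
  have "(\<lambda>x. \<gamma> ** x) ` cosetU g = cosetU g \<longleftrightarrow> (\<exists>u\<in>U3. \<gamma> ** g = g ** u)" for \<gamma>
  proof
    assume "(\<lambda>x. \<gamma> ** x) ` cosetU g = cosetU g"
    moreover have "\<gamma> ** (g ** mat 1) \<in> (\<lambda>x. \<gamma> ** x) ` cosetU g"
      unfolding cosetU_def using mat_1_in_U3 by blast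
    ultimately show "\<exists>u\<in>U3. \<gamma> ** g = g ** u" unfolding cosetU_def by auto
  next
    assume "\<exists>u\<in>U3. \<gamma> ** g = g ** u"
    then obtain u where u: "u \<in> U3" "\<gamma> ** g = g ** u" by blast
    have "(\<lambda>x. \<gamma> ** x) ` cosetU g = (\<lambda>x. g ** x) ` ((\<lambda>x. u ** x) ` U3)"
      unfolding cosetU_def image_image by (simp add: matrix_mul_assoc u(2))
    then show "(\<lambda>x. \<gamma> ** x) ` cosetU g = cosetU g" by (simp add: U3_left_translate u(1) cosetU_def)
  qed
  then show ?thesis unfolding stabGamma_def by blast
qed

lemma conjugate_exists:
  fixes g :: mat3 assumes "det g \<noteq> 0" obtains u where "\<gamma> ** g = g ** u"
proof -
  obtain g' where "g ** g' = mat 1" using assms invertible_det_nz invertible_def by blast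
  then have "\<gamma> ** g = g ** (g' ** \<gamma> ** g)" by (simp add: matrix_mul_assoc)
  then show ?thesis using that by blast
qed

lemma Pb_conjugate_U3_iff:
  assumes "g \<in> Pb" "\<gamma> ** g = g ** u" shows "\<gamma> \<in> U3 \<longleftrightarrow> u \<in> U3"
proof -
  have "g$2$1 = 0" "g$3$1 = 0" "g$3$2 = 0" "g$1$1 * g$2$2 * g$3$3 = 1"
    using assms(1) by (auto simp: Pb_def SL3R_def det_3)
  then show ?thesis using assms(2) unfolding mat3_eq_iff matrix_mult_3_nth U3_def by auto
qed

lemma stabGamma_Pb: assumes "g \<in> Pb" shows "stabGamma g = H3Z"
proof -
  have "det g \<noteq> 0" using assms by (simp add: Pb_def SL3R_def)
  then have "(\<exists>u\<in>U3. \<gamma> ** g = g ** u) \<longleftrightarrow> \<gamma> \<in> U3" for \<gamma>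
    using Pb_conjugate_U3_iff[OF assms] conjugate_exists by metis
  then show ?thesis unfolding stabGamma_eq H3Z_def by blast
qed

lemma U3_conjugate_in_Gamma1:
  assumes g: "g \<in> P1" "g \<notin> setmul SL3Z Pb"
    and \<gamma>: "\<gamma> \<in> SL3Z" and u: "u \<in> U3" and eq: "\<gamma> ** g = g ** u"
  shows "\<gamma> \<in> Gamma1"
proof -
  have E: "(\<gamma> ** g)$i$j = (g ** u)$i$j" for i j using eq by simp
  have g0: "g$3$1 = 0" "g$3$2 = 0" using g(1) by (simp_all add: P1_def)
  have g33: "g$3$3 \<noteq> 0" and minor: "g$1$1 * g$2$2 - g$2$1 * g$1$2 \<noteq> 0"
    using P1_det[OF g(1)] by (auto simp: mult.commute)
  have "g$1$1 * \<gamma>$3$1 + g$2$1 * \<gamma>$3$2 = 0" "g$1$2 * \<gamma>$3$1 + g$2$2 * \<gamma>$3$2 = 0"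
    using E[of 3 1] E[of 3 2] g0 u by (simp_all add: matrix_mult_3_nth U3_def algebra_simps)
  note row3 = kernel_2x2_trivial[OF this minor]
  have "\<gamma>$3$3 = 1" using E[of 3 3] g0 row3 u g33 by (simp add: matrix_mult_3_nth U3_def)
  have fixed: "\<gamma>$1$1 * g$1$1 + \<gamma>$1$2 * g$2$1 = g$1$1" "\<gamma>$2$1 * g$1$1 + \<gamma>$2$2 * g$2$1 = g$2$1"
    using E[of 1 1] E[of 2 1] g0 u by (simp_all add: matrix_mult_3_nth U3_def)
  have int: "\<gamma>$i$j \<in> \<int>" for i j using \<gamma> by (simp add: SL3Z_def)
  have "\<gamma>$1$1 = 1 \<and> \<gamma>$1$2 = 0 \<and> \<gamma>$2$1 = 0 \<and> \<gamma>$2$2 = 1"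
  proof (rule ccontr)
    assume "\<not> ?thesis"
    then obtain m n where "m \<in> \<int>" "n \<in> \<int>" "m \<noteq> 0 \<or> n \<noteq> 0" "m * g$1$1 + n * g$2$1 = 0"
      using integer_relation_of_fixed_pair[OF int int int int fixed] by blast
    then show False using in_setmul_SL3Z_Pb_of_P1 g by blast
  qed
  then show ?thesis unfolding Gamma1_eq using \<gamma> row3 \<open>\<gamma>$3$3 = 1\<close> by simp
qed

lemma Gamma1_conjugate_in_U3:
  assumes g: "g \<in> P1" and \<gamma>: "\<gamma> \<in> Gamma1" and eq: "\<gamma> ** g = g ** u"
  shows "u \<in> U3"
proof -
  have E: "(\<gamma> ** g)$i$j = (g ** u)$i$j" for i j using eq by simp
  have g0: "g$3$1 = 0" "g$3$2 = 0" using g by (simp_all add: P1_def)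
  have g33: "g$3$3 \<noteq> 0" and minor: "g$1$1 * g$2$2 - g$1$2 * g$2$1 \<noteq> 0"
    using P1_det[OF g] by auto
  have \<gamma>0: "\<gamma>$1$1 = 1" "\<gamma>$1$2 = 0" "\<gamma>$2$1 = 0" "\<gamma>$2$2 = 1" "\<gamma>$3$1 = 0" "\<gamma>$3$2 = 0" "\<gamma>$3$3 = 1"
    using \<gamma> by (simp_all add: Gamma1_eq)
  have row3: "u$3$1 = 0" "u$3$2 = 0" "u$3$3 = 1"
    using E[of 3 1] E[of 3 2] E[of 3 3] g0 \<gamma>0 g33 by (simp_all add: matrix_mult_3_nth)
  have "g$1$1 * (u$1$1 - 1) + g$1$2 * u$2$1 = 0" "g$2$1 * (u$1$1 - 1) + g$2$2 * u$2$1 = 0"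
    using E[of 1 1] E[of 2 1] g0 \<gamma>0 row3 by (simp_all add: matrix_mult_3_nth algebra_simps)
  note col1 = kernel_2x2_trivial[OF this minor]
  have "g$1$1 * u$1$2 + g$1$2 * (u$2$2 - 1) = 0" "g$2$1 * u$1$2 + g$2$2 * (u$2$2 - 1) = 0"
    using E[of 1 2] E[of 2 2] g0 \<gamma>0 row3 by (simp_all add: matrix_mult_3_nth algebra_simps)
  note col2 = kernel_2x2_trivial[OF this minor]
  show ?thesis using row3 col1 col2 by (simp add: U3_def)
qed

lemma stabGamma_P1:
  assumes "g \<in> P1" "g \<notin> setmul SL3Z Pb" shows "stabGamma g = Gamma1"
proof -
  have "det g \<noteq> 0" using assms(1) by (simp add: P1_def SL3R_def)
  have "\<gamma> \<in> stabGamma g" if \<gamma>: "\<gamma> \<in> Gamma1" for \<gamma>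
  proof -
    obtain u where u: "\<gamma> ** g = g ** u" using conjugate_exists \<open>det g \<noteq> 0\<close> by blast
    moreover have "u \<in> U3" using Gamma1_conjugate_in_U3 assms(1) \<gamma> u by blast
    moreover have "\<gamma> \<in> SL3Z" using \<gamma> by (simp add: Gamma1_eq)
    ultimately show ?thesis unfolding stabGamma_eq by blast
  qed
  moreover have "stabGamma g \<subseteq> Gamma1"
    unfolding stabGamma_eq using U3_conjugate_in_Gamma1[OF assms] by blast
  ultimately show ?thesis by blast
qed

lemma U3_conjugate_in_Gamma2:
  assumes g: "g \<in> P2" "g \<notin> setmul SL3Z Pb"
    and \<gamma>: "\<gamma> \<in> SL3Z" and u: "u \<in> U3" and eq: "\<gamma> ** g = g ** u"
  shows "\<gamma> \<in> Gamma2"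
proof -
  have E: "(\<gamma> ** g)$i$j = (g ** u)$i$j" for i j using eq by simp
  have g0: "g$2$1 = 0" "g$3$1 = 0" using g(1) by (simp_all add: P2_def)
  have g11: "g$1$1 \<noteq> 0" using P2_det[OF g(1)] by auto
  have col1: "\<gamma>$1$1 = 1" "\<gamma>$2$1 = 0" "\<gamma>$3$1 = 0"
    using E[of 1 1] E[of 2 1] E[of 3 1] g0 g11 u by (simp_all add: matrix_mult_3_nth U3_def)
  have fixed: "\<gamma>$2$2 * g$2$2 + \<gamma>$2$3 * g$3$2 = g$2$2" "\<gamma>$3$2 * g$2$2 + \<gamma>$3$3 * g$3$2 = g$3$2"
    using E[of 2 2] E[of 3 2] g0 col1 u by (simp_all add: matrix_mult_3_nth U3_def)
  have int: "\<gamma>$i$j \<in> \<int>" for i j using \<gamma> by (simp add: SL3Z_def)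
  have "\<gamma>$2$2 = 1 \<and> \<gamma>$2$3 = 0 \<and> \<gamma>$3$2 = 0 \<and> \<gamma>$3$3 = 1"
  proof (rule ccontr)
    assume "\<not> ?thesis"
    then obtain m n where "m \<in> \<int>" "n \<in> \<int>" "m \<noteq> 0 \<or> n \<noteq> 0" "m * g$2$2 + n * g$3$2 = 0"
      using integer_relation_of_fixed_pair[OF int int int int fixed] by blast
    then show False using in_setmul_SL3Z_Pb_of_P2 g by blast
  qed
  then show ?thesis unfolding Gamma2_eq using \<gamma> col1 by simp
qed

lemma Gamma2_conjugate_in_U3:
  assumes g: "g \<in> P2" and \<gamma>: "\<gamma> \<in> Gamma2" and eq: "\<gamma> ** g = g ** u"
  shows "u \<in> U3"
proof -
  have E: "(\<gamma> ** g)$i$j = (g ** u)$i$j" for i j using eq by simp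
  have g0: "g$2$1 = 0" "g$3$1 = 0" using g by (simp_all add: P2_def)
  have g11: "g$1$1 \<noteq> 0" and minor: "g$2$2 * g$3$3 - g$2$3 * g$3$2 \<noteq> 0"
    using P2_det[OF g] by auto
  have \<gamma>0: "\<gamma>$1$1 = 1" "\<gamma>$2$1 = 0" "\<gamma>$2$2 = 1" "\<gamma>$2$3 = 0" "\<gamma>$3$1 = 0" "\<gamma>$3$2 = 0" "\<gamma>$3$3 = 1"
    using \<gamma> by (simp_all add: Gamma2_eq)
  have "g$2$2 * u$2$1 + g$2$3 * u$3$1 = 0" "g$3$2 * u$2$1 + g$3$3 * u$3$1 = 0"
    using E[of 2 1] E[of 3 1] g0 \<gamma>0 by (simp_all add: matrix_mult_3_nth)
  note col1 = kernel_2x2_trivial[OF this minor]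
  have "g$2$2 * (u$2$2 - 1) + g$2$3 * u$3$2 = 0" "g$3$2 * (u$2$2 - 1) + g$3$3 * u$3$2 = 0"
    using E[of 2 2] E[of 3 2] g0 \<gamma>0 by (simp_all add: matrix_mult_3_nth algebra_simps)
  note col2 = kernel_2x2_trivial[OF this minor]
  have "g$2$2 * u$2$3 + g$2$3 * (u$3$3 - 1) = 0" "g$3$2 * u$2$3 + g$3$3 * (u$3$3 - 1) = 0"
    using E[of 2 3] E[of 3 3] g0 \<gamma>0 by (simp_all add: matrix_mult_3_nth algebra_simps)
  note col3 = kernel_2x2_trivial[OF this minor]
  have "u$1$1 = 1" using E[of 1 1] g0 \<gamma>0 col1 g11 by (simp add: matrix_mult_3_nth)
  then show ?thesis using col1 col2 col3 by (simp add: U3_def)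
qed

lemma stabGamma_P2:
  assumes "g \<in> P2" "g \<notin> setmul SL3Z Pb" shows "stabGamma g = Gamma2"
proof -
  have "det g \<noteq> 0" using assms(1) by (simp add: P2_def SL3R_def)
  have "\<gamma> \<in> stabGamma g" if \<gamma>: "\<gamma> \<in> Gamma2" for \<gamma>
  proof -
    obtain u where u: "\<gamma> ** g = g ** u" using conjugate_exists \<open>det g \<noteq> 0\<close> by blast
    moreover have "u \<in> U3" using Gamma2_conjugate_in_U3 assms(1) \<gamma> u by blast
    moreover have "\<gamma> \<in> SL3Z" using \<gamma> by (simp add: Gamma2_eq)
    ultimately show ?thesis unfolding stabGamma_eq by blast
  qed
  moreover have "stabGamma g \<subseteq> Gamma2"
    unfolding stabGamma_eq using U3_conjugate_in_Gamma2[OF assms] by blast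
  ultimately show ?thesis by blast
qed

lemma U3_conjugate_flag:
  fixes g :: mat3
  assumes "u \<in> U3" "\<gamma> ** g = g ** u"
  shows "(\<gamma> - mat 1) *v column 1 g = 0" "(\<gamma> - mat 1) *v column 2 g = u$1$2 *\<^sub>R column 1 g"
proof -
  have "(\<gamma> - mat 1) *v column j g = column j (g ** u) - column j g" for j
  proof -
    have "\<gamma> *v column j g = column j (\<gamma> ** g)"
      by (simp add: vec_eq_iff matrix_vector_mult_nth_inner matrix_mult_nth_inner column_def)
    then show ?thesis by (simp add: matrix_vector_mult_diff_rdistrib assms(2))
  qed
  moreover have "column 1 (g ** u) = column 1 g"
    "column 2 (g ** u) = u$1$2 *\<^sub>R column 1 g + column 2 g"
    using assms(1) by (simp_all add: vec_eq_iff column_def matrix_mult_3_nth U3_def)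
  ultimately show "(\<gamma> - mat 1) *v column 1 g = 0"
    "(\<gamma> - mat 1) *v column 2 g = u$1$2 *\<^sub>R column 1 g"
    by simp_all
qed

lemma rational_line_or_rational_plane:
  fixes N :: mat3
  assumes N: "\<forall>i j. N$i$j \<in> \<int>" "N \<noteq> 0" and "N *v v1 = 0" "N *v v2 = c *\<^sub>R v1"
  shows "(\<exists>w. (\<forall>i. w$i \<in> \<int>) \<and> w \<noteq> 0 \<and> cross3 v1 w = 0) \<or>
         (\<exists>n. (\<forall>i. n$i \<in> \<int>) \<and> n \<noteq> 0 \<and> n \<bullet> v1 = 0 \<and> n \<bullet> v2 = 0)"
proof -
  have v1: "N$i \<bullet> v1 = 0" and v2: "N$i \<bullet> v2 = c * v1$i" for i
    using arg_cong[OF assms(3), of "\<lambda>x. x$i"] arg_cong[OF assms(4), of "\<lambda>x. x$i"]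
    by (simp_all add: matrix_vector_mult_nth_inner)
  show ?thesis
  proof (cases "\<exists>i j. cross3 (N$i) (N$j) \<noteq> 0")
    case True
    then obtain i j where w: "cross3 (N$i) (N$j) \<noteq> 0" by blast
    have "\<forall>k. cross3 (N$i) (N$j) $ k \<in> \<int>" by (simp add: cross3_def forall_3 N(1))
    moreover have "cross3 v1 (cross3 (N$i) (N$j)) = 0" using v1 by (simp add: cross3_cross3 inner_commute)
    ultimately show ?thesis using w by (intro disjI1 exI[of _ "cross3 (N$i) (N$j)"]) simp
  next
    case False
    obtain m k where mk: "N$m$k \<noteq> 0" using N(2) by (auto simp: vec_eq_iff)
    show ?thesis
    proof (cases "N$m \<bullet> v2 = 0")
      case True
      moreover have "N$m \<noteq> 0" using mk by auto
      ultimately show ?thesis using v1 N(1) by (intro disjI2 exI[of _ "N$m"]) simp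
    next
      case False
      \<comment> \<open>\<open>N\<close> has rank one, so its column \<open>k\<close> spans its image, which contains \<open>N v2 = c v1\<close>\<close>
      have rel: "(N$m \<bullet> v2) * N$i$k = c * N$m$k * v1$i" for i
        using parallel_inner_nth[of "N$i" "N$m" v2 k] \<open>\<not> (\<exists>i j. cross3 (N$i) (N$j) \<noteq> 0)\<close> v2
        by (simp add: algebra_simps)
      define t where "t = c * N$m$k / (N$m \<bullet> v2)"
      have "N$i$k = t * v1$i" for i
        using rel[of i] False by (simp add: t_def field_simps)
      then have "column k N = t *\<^sub>R v1"
        by (simp add: vec_eq_iff column_def)
      then have "cross3 v1 (column k N) = 0" by (simp add: cross_mult_right)
      moreover have "column k N \<noteq> 0" using mk by (auto simp: vec_eq_iff column_def)
      moreover have "\<forall>i. column k N $ i \<in> \<int>" using N(1) by (simp add: column_def)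
      ultimately show ?thesis by (intro disjI1 exI[of _ "column k N"]) simp
    qed
  qed
qed

lemma stabGamma_trivial:
  assumes "g \<in> SL3R" "g \<notin> setmul SL3Z P1" "g \<notin> setmul SL3Z P2"
  shows "stabGamma g = {mat 1}"
proof -
  have det: "det g = 1" using assms(1) by (simp add: SL3R_def)
  have "\<gamma> = mat 1" if \<gamma>: "\<gamma> \<in> SL3Z" and u: "u \<in> U3" and eq: "\<gamma> ** g = g ** u" for \<gamma> u
  proof (rule ccontr)
    assume "\<gamma> \<noteq> mat 1"
    define N where "N = \<gamma> - mat 1"
    have "N \<noteq> 0" using \<open>\<gamma> \<noteq> mat 1\<close> by (simp add: N_def)
    moreover have "\<forall>i j. N$i$j \<in> \<int>" using \<gamma> by (simp add: N_def SL3Z_def mat_def)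
    moreover have "N *v column 1 g = 0" "N *v column 2 g = u$1$2 *\<^sub>R column 1 g"
      using U3_conjugate_flag[OF u eq] by (simp_all add: N_def)
    then consider w where "\<forall>i. w$i \<in> \<int>" "w \<noteq> 0" "cross3 (column 1 g) w = 0"
      | n where "\<forall>i. n$i \<in> \<int>" "n \<noteq> 0" "n \<bullet> column 1 g = 0" "n \<bullet> column 2 g = 0"
      using rational_line_or_rational_plane[OF \<open>\<forall>i j. N$i$j \<in> \<int>\<close> \<open>N \<noteq> 0\<close>] by blast
    then show False
      using in_setmul_SL3Z_P1I[OF det] in_setmul_SL3Z_P2I[OF det] assms(2,3) by cases blast+
  qed
  then have "stabGamma g \<subseteq> {mat 1}" unfolding stabGamma_eq by blast
  moreover have "mat 1 \<in> stabGamma g"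
    unfolding stabGamma_eq using mat_1_in_SL3Z by (auto intro: bexI[OF _ mat_1_in_U3])
  ultimately show ?thesis by blast
qed

theorem lemma5p17:
  shows "(\<forall>g \<in> Pb_plus. stabGamma g = H3Z)
       \<and> (\<forall>g \<in> P1_plus - setmul SL3Z Pb. stabGamma g = Gamma1)
       \<and> (\<forall>g \<in> P2_plus - setmul SL3Z Pb. stabGamma g = Gamma2)
       \<and> (\<forall>g \<in> SL3R - (setmul SL3Z P1 \<union> setmul SL3Z P2). stabGamma g = {mat 1})"
proof -
  have "Pb_plus \<subseteq> Pb" "P1_plus \<subseteq> P1" "P2_plus \<subseteq> P2"
    by (auto simp: Pb_plus_def P1_plus_def P2_plus_def)
  then show ?thesis using stabGamma_Pb stabGamma_P1 stabGamma_P2 stabGamma_trivial by blast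
qed

end
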